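(* Let $T_0 \in \mathcal{G}(X)$ be fixed. If $\mathcal{R}(Z) \cap \mathcal{G}_{T_0}$ is dense in $\mathcal{G}_{T_0}$, then $\mathcal{S}_{T_0}$ is a first category subset of $\mathcal{G}_{T_0}$.
   Context: Let $(X,m)$ and $(Y,\nu)$ both be the unit interval with Lebesgue measure, and $(Z,\mu) = (X\times Y, m\times\nu)$. For a probability space $W$, $\mathcal{G}(W)$ denotes the set of invertible measure-preserving transformations of $W$, equipped with the weak topology ($T_n \to T$ iff $\mu(T_nE \triangle TE) \to 0$ for every measurable $E$). For $T_0 \in \mathcal{G}(X)$, $\mathcal{G}_{T_0} \subset \mathcal{G}(Z)$ is the set of extensions of $T_0$ through the projection $Z\to X$, i.e. transformations of the form $T(x,y) = (T_0x, T_x y)$ with $T_x \in \mathcal{G}(Y)$; it carries the (relative) weak topology. $T_0$ is also identified with $T_0 \times \mathrm{id}_Y$ on $Z$. A transformation $T$ on a space $W$ is rigid if there is a subsequence $n_k$ with $T^{n_k} \to \mathrm{id}_W$ strongly (as Koopman operators on $L^2(W)$); $\mathcal{R}(Z)$ is the set of rigid transformations of $Z$. $\mathbb{E}(\cdot|X)$ denotes conditional expectation onto the $\sigma$-algebra of sets $B\times Y$ (viewed as functions on $X$). $L^2(Z|X)$ is the space of $f \in L^2(Z)$ with $\|f\|_{L^2(Z|X)} := \mathbb{E}(|f|^2|X)^{1/2} \in L^\infty(X)$. $T\in\mathcal{G}_{T_0}$ is a (strongly) mixing extension of $T_0$ if for all $f,g \in L^2(Z|X)$, $\lim_{n\to\infty}\|\mathbb{E}(T^n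 f\cdot \overline{g}|X) - T_0^n\mathbb{E}(f|X)\,\mathbb{E}(\overline{g}|X)\|_{L^2(X)} = 0$, where $T^n f = f\circ T^n$. $\mathcal{S}_{T_0}$ denotes the set of strongly mixing extensions of $T_0$. *)

theory Defs
  imports "HOL-Analysis.Analysis" "HOL-Probability.Probability"
begin

definition UI :: "real measure" where
  "UI = restrict_space lborel {0..1}"

definition ZZ :: "(real \<times> real) measure" where
  "ZZ = UI \<Otimes>\<^sub>M UI"

definition MPT :: "'a measure \<Rightarrow> ('a \<Rightarrow> 'a) set" where
  "MPT M = {T. bij_betw T (space M) (space M) \<and> T \<in> measurable M M
              \<and> the_inv_into (space M) T \<in> measurable M M \<and> distr M M T = M}"

definition weak_top :: "'a measure \<Rightarrow> ('a \<Rightarrow> 'a) topology" where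
  "weak_top M = topology_generated_by
     {{S \<in> MPT M. measure M ((S ` E - T ` E) \<union> (T ` E - S ` E)) < e} | T E e.
        T \<in> MPT M \<and> E \<in> sets M \<and> e > 0}"

definition ext_set :: "(real \<Rightarrow> real) \<Rightarrow> (real \<times> real \<Rightarrow> real \<times> real) set" where
  "ext_set T0 = {T \<in> MPT ZZ.
      (\<forall>x\<in>{0..1}. \<forall>y\<in>{0..1}. fst (T (x, y)) = T0 x)
    \<and> (\<forall>x\<in>{0..1}. (\<lambda>y. snd (T (x, y))) \<in> MPT UI)}"

definition rigid :: "'a measure \<Rightarrow> ('a \<Rightarrow> 'a) \<Rightarrow> bool" where
  "rigid M T \<longleftrightarrow> (\<exists>n::nat \<Rightarrow> nat. strict_mono n \<and>
     (\<forall>f::'a \<Rightarrow> complex. f \<in> borel_measurable M \<and> integrable M (\<lambda>x. (cmod (f x))\<^sup>2) \<longrightarrow>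
        (\<lambda>k. sqrt (\<integral>x. (cmod (f ((T ^^ n k) x) - f x))\<^sup>2 \<partial>M)) \<longlonglongrightarrow> 0))"

definition rigid_set :: "'a measure \<Rightarrow> ('a \<Rightarrow> 'a) set" where
  "rigid_set M = {T \<in> MPT M. rigid M T}"

definition Xalg :: "(real \<times> real) measure" where
  "Xalg = vimage_algebra (space ZZ) fst UI"

definition cond_exp_c :: "'a measure \<Rightarrow> 'a measure \<Rightarrow> ('a \<Rightarrow> complex) \<Rightarrow> 'a \<Rightarrow> complex" where
  "cond_exp_c M F f = (\<lambda>z. complex_of_real (real_cond_exp M F (\<lambda>x. Re (f x)) z)
                         + \<i> * complex_of_real (real_cond_exp M F (\<lambda>x. Im (f x)) z))"

definition L2rel :: "(real \<times> real \<Rightarrow> complex) \<Rightarrow> bool" where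
  "L2rel f \<longleftrightarrow> f \<in> borel_measurable ZZ \<and> integrable ZZ (\<lambda>z. (cmod (f z))\<^sup>2)
     \<and> (\<exists>C. AE z in ZZ. real_cond_exp ZZ Xalg (\<lambda>w. (cmod (f w))\<^sup>2) z \<le> C)"

text \<open>Mixing extension.  Functions on X are lifted to X x Y (constant in y); since the
  second factor is a probability space, the L^2(X) norm equals the L^2(Z) norm of the lift.\<close>
definition mixing_ext :: "(real \<Rightarrow> real) \<Rightarrow> (real \<times> real \<Rightarrow> real \<times> real) \<Rightarrow> bool" where
  "mixing_ext T0 T \<longleftrightarrow> (\<forall>f g. L2rel f \<and> L2rel g \<longrightarrow>
     (\<lambda>n. sqrt (\<integral>z. (cmod (cond_exp_c ZZ Xalg (\<lambda>w. f ((T ^^ n) w) * cnj (g w)) z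
                         - cond_exp_c ZZ Xalg f ((T0 ^^ n) (fst z), snd z)
                           * cond_exp_c ZZ Xalg (\<lambda>w. cnj (g w)) z))\<^sup>2 \<partial>ZZ)) \<longlonglongrightarrow> 0)"

definition mixing_ext_set :: "(real \<Rightarrow> real) \<Rightarrow> (real \<times> real \<Rightarrow> real \<times> real) set" where
  "mixing_ext_set T0 = {T \<in> ext_set T0. mixing_ext T0 T}"

definition nowhere_dense_in :: "'a topology \<Rightarrow> 'a set \<Rightarrow> bool" where
  "nowhere_dense_in U S \<longleftrightarrow> S \<subseteq> topspace U \<and> U interior_of (U closure_of S) = {}"

definition first_category_in :: "'a topology \<Rightarrow> 'a set \<Rightarrow> bool" where
  "first_category_in U S \<longleftrightarrow> (\<exists>A :: nat \<Rightarrow> 'a set. (\<forall>n. nowhere_dense_in U (A n)) \<and> S \<subseteq> (\<Union>n. A n))"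

end

theory Submission
  imports Defs
begin

(* Let B = [0,1] x [0,1/2] and f = 1 on B, -1 off B, so that E(f|X) = 0. For a mixing extension T
   this gives \<integral> f o T^n * f \<rightarrow> 0, i.e. \<mu>(T^n B \<triangle> B) \<rightarrow> 1/2, whereas a rigid T has
   \<mu>(T^n B \<triangle> B) \<rightarrow> 0 along a subsequence. Since T \<mapsto> \<mu>(T^n B \<triangle> B) is continuous in the weak
   topology, each set {T. \<forall>n \<ge> N. \<mu>(T^n B \<triangle> B) \<ge> 1/4} is nowhere dense once the rigid extensions
   are dense, and these countably many sets cover the mixing extensions. *)

lemma MPT_bij: "T \<in> MPT M \<Longrightarrow> bij_betw T (space M) (space M)"
  and MPT_measurable: "T \<in> MPT M \<Longrightarrow> T \<in> measurable M M"
  and MPT_inv_measurable: "T \<in> MPT M \<Longrightarrow> the_inv_into (space M) T \<in> measurable M M"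
  and MPT_distr: "T \<in> MPT M \<Longrightarrow> distr M M T = M"
  by (simp_all add: MPT_def)

lemma MPT_id: "id \<in> MPT M"
proof -
  have "the_inv_into (space M) id x = id x" if "x \<in> space M" for x
    using that by (simp add: the_inv_into_f_eq)
  then have "the_inv_into (space M) id \<in> measurable M M"
    using measurable_cong[of M "the_inv_into (space M) id" id M] by simp
  then show ?thesis by (simp add: MPT_def id_def bij_betw_def)
qed

lemma MPT_comp:
  assumes S: "S \<in> MPT M" and T: "T \<in> MPT M"
  shows "S \<circ> T \<in> MPT M"
proof -
  have bS: "bij_betw S (space M) (space M)" and bT: "bij_betw T (space M) (space M)"
    using S T by (simp_all add: MPT_bij)
  have inv: "the_inv_into (space M) (S \<circ> T) x
      = (the_inv_into (space M) T \<circ> the_inv_into (space M) S) x" if "x \<in> space M" for x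
    using the_inv_into_comp[of S T "space M" x] bS bT that by (simp add: bij_betw_def)
  have "the_inv_into (space M) T \<circ> the_inv_into (space M) S \<in> measurable M M"
    using S T by (intro measurable_comp[OF MPT_inv_measurable MPT_inv_measurable])
  moreover have "the_inv_into (space M) (S \<circ> T) \<in> measurable M M \<longleftrightarrow>
      the_inv_into (space M) T \<circ> the_inv_into (space M) S \<in> measurable M M"
    by (rule measurable_cong) (rule inv)
  ultimately have "the_inv_into (space M) (S \<circ> T) \<in> measurable M M" by simp
  moreover have "distr M M (S \<circ> T) = M"
    using distr_distr[OF MPT_measurable[OF S] MPT_measurable[OF T]]
    by (simp only: MPT_distr[OF S] MPT_distr[OF T])
  ultimately show ?thesis
    unfolding MPT_def using bij_betw_trans[OF bT bS]
      measurable_comp[OF MPT_measurable[OF T] MPT_measurable[OF S]] by blast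
qed

lemma MPT_funpow: "T \<in> MPT M \<Longrightarrow> T ^^ n \<in> MPT M"
  by (induction n) (simp_all add: MPT_id MPT_comp)

lemma MPT_measure_vimage:
  assumes "T \<in> MPT M" "A \<in> sets M"
  shows "measure M (T -` A \<inter> space M) = measure M A"
  using assms by (metis MPT_distr MPT_measurable measure_distr)

lemma MPT_image_eq_vimage_inv:
  assumes "T \<in> MPT M" "A \<subseteq> space M"
  shows "T ` A = the_inv_into (space M) T -` A \<inter> space M"
proof -
  have "bij_betw T (space M) (space M)" using assms(1) by (rule MPT_bij)
  then show ?thesis using assms(2)
    by (auto simp: bij_betw_def the_inv_into_f_f)
      (metis f_the_inv_into_f image_eqI)
qed

lemma MPT_image_sets: "T \<in> MPT M \<Longrightarrow> A \<in> sets M \<Longrightarrow> T ` A \<in> sets M"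
  by (simp add: MPT_image_eq_vimage_inv sets.sets_into_space measurable_sets[OF MPT_inv_measurable])

lemma MPT_measure_image:
  assumes T: "T \<in> MPT M" and A: "A \<in> sets M"
  shows "measure M (T ` A) = measure M A"
proof -
  have "T -` (T ` A) \<inter> space M = A"
    using MPT_bij[OF T] sets.sets_into_space[OF A] by (auto simp: bij_betw_def inj_on_def)
  then show ?thesis using MPT_measure_vimage[OF T MPT_image_sets[OF T A]] by simp
qed

lemma (in finite_measure) measure_sym_diff_triangle:
  assumes "A \<in> sets M" "B \<in> sets M" "C \<in> sets M"
  shows "measure M (sym_diff A C) \<le> measure M (sym_diff A B) + measure M (sym_diff B C)"
proof -
  have "measure M (sym_diff A C) \<le> measure M (sym_diff A B \<union> sym_diff B C)"
    using assms by (intro finite_measure_mono) auto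
  also have "\<dots> \<le> measure M (sym_diff A B) + measure M (sym_diff B C)"
    using assms by (intro measure_Un_le) auto
  finally show ?thesis .
qed

lemma (in finite_measure) abs_diff_measure_sym_diff_le:
  assumes "A \<in> sets M" "B \<in> sets M" "C \<in> sets M"
  shows "\<bar>measure M (sym_diff A C) - measure M (sym_diff B C)\<bar> \<le> measure M (sym_diff A B)"
  using measure_sym_diff_triangle[OF assms] measure_sym_diff_triangle[OF assms(2,1,3)]
  by (simp add: abs_le_iff Un_commute)

lemma MPT_measure_sym_diff_image:
  assumes T: "T \<in> MPT M" and "A \<in> sets M" "B \<in> sets M"
  shows "measure M (sym_diff (T ` A) (T ` B)) = measure M (sym_diff A B)"
proof -
  have "inj_on T (space M)" using MPT_bij[OF T] by (simp add: bij_betw_def)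
  then have "sym_diff (T ` A) (T ` B) = T ` sym_diff A B"
    using assms(2,3)[THEN sets.sets_into_space] unfolding inj_on_def by blast
  then show ?thesis using assms by (simp add: MPT_measure_image)
qed

lemma openin_weak_top_basic:
  assumes "T \<in> MPT M" "E \<in> sets M" "e > 0"
  shows "openin (weak_top M) {S \<in> MPT M. measure M (sym_diff (S ` E) (T ` E)) < e}"
  unfolding weak_top_def by (rule topology_generated_by_Basis) (use assms in blast)

lemma topspace_weak_top: "topspace (weak_top M) = MPT M"
proof
  show "topspace (weak_top M) \<subseteq> MPT M"
    unfolding weak_top_def by auto
  show "MPT M \<subseteq> topspace (weak_top M)"
  proof
    fix T assume T: "T \<in> MPT M"
    have "T \<in> {S \<in> MPT M. measure M (sym_diff (S ` {}) (T ` {})) < 1}"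
      using T by simp
    then show "T \<in> topspace (weak_top M)"
      using openin_weak_top_basic[OF T, of "{}" 1] openin_subset by auto
  qed
qed

lemma weak_top_funpow_image_continuous:
  assumes "finite_measure M" and T: "T \<in> MPT M" and B: "B \<in> sets M"
  shows "e > 0 \<Longrightarrow> \<exists>U. openin (weak_top M) U \<and> T \<in> U \<and>
          (\<forall>S\<in>U. measure M (sym_diff ((S ^^ n) ` B) ((T ^^ n) ` B)) < e)"
proof (induction n arbitrary: e)
  case 0
  then show ?case
    using T openin_topspace[of "weak_top M"] by (intro exI[of _ "MPT M"]) (simp add: topspace_weak_top)
next
  case (Suc n)
  interpret finite_measure M by fact
  obtain U where U: "openin (weak_top M) U" "T \<in> U"
     "\<And>S. S \<in> U \<Longrightarrow> measure M (sym_diff ((S ^^ n) ` B) ((T ^^ n) ` B)) < e/2"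
    using Suc.IH[of "e/2"] Suc.prems by auto
  define G where "G = (T ^^ n) ` B"
  have G: "G \<in> sets M" unfolding G_def using MPT_funpow[OF T] B by (rule MPT_image_sets)
  define V where "V = {S \<in> MPT M. measure M (sym_diff (S ` G) (T ` G)) < e/2}"
  \<comment> \<open>\<mu>(S(S^n B) \<triangle> S(T^n B)) = \<mu>(S^n B \<triangle> T^n B) < e/2 on U, and \<mu>(S(T^n B) \<triangle> T(T^n B)) < e/2 on V\<close>
  have "measure M (sym_diff ((S ^^ Suc n) ` B) ((T ^^ Suc n) ` B)) < e" if S: "S \<in> U \<inter> V" for S
  proof -
    have SM: "S \<in> MPT M" using S by (simp add: V_def)
    define X where "X = (S ^^ n) ` B"
    have X: "X \<in> sets M" unfolding X_def using MPT_funpow[OF SM] B by (rule MPT_image_sets)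
    have "measure M (sym_diff (S ` X) (T ` G))
        \<le> measure M (sym_diff (S ` X) (S ` G)) + measure M (sym_diff (S ` G) (T ` G))"
      using X G SM T by (intro measure_sym_diff_triangle MPT_image_sets)
    also have "measure M (sym_diff (S ` X) (S ` G)) = measure M (sym_diff X G)"
      using SM X G by (rule MPT_measure_sym_diff_image)
    finally show ?thesis
      using U(3)[of S] S unfolding X_def G_def V_def by (simp add: image_comp)
  qed
  moreover have "openin (weak_top M) (U \<inter> V)"
    unfolding V_def using U(1) openin_weak_top_basic[OF T G, of "e/2"] Suc.prems by (simp add: openin_Int)
  moreover have "T \<in> U \<inter> V" using U(2) T Suc.prems by (simp add: V_def)
  ultimately show ?case by blast
qed

lemma weak_top_measure_sym_diff_funpow_continuous:
  assumes "finite_measure M" and T: "T \<in> MPT M" and B: "B \<in> sets M" and "e > 0"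
  shows "\<exists>U. openin (weak_top M) U \<and> T \<in> U \<and>
    (\<forall>S\<in>U. \<bar>measure M (sym_diff ((S ^^ n) ` B) B) - measure M (sym_diff ((T ^^ n) ` B) B)\<bar> < e)"
proof -
  interpret finite_measure M by fact
  obtain U where U: "openin (weak_top M) U" "T \<in> U"
    "\<forall>S\<in>U. measure M (sym_diff ((S ^^ n) ` B) ((T ^^ n) ` B)) < e"
    using weak_top_funpow_image_continuous[OF assms, of n] by (elim exE conjE)
  have "\<bar>measure M (sym_diff ((S ^^ n) ` B) B) - measure M (sym_diff ((T ^^ n) ` B) B)\<bar> < e"
    if S: "S \<in> U" for S
  proof -
    have "S \<in> MPT M" using S U(1) openin_subset topspace_weak_top by blast
    then have "(S ^^ n) ` B \<in> sets M" using B by (intro MPT_image_sets MPT_funpow)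
    moreover have "(T ^^ n) ` B \<in> sets M" using T B by (intro MPT_image_sets MPT_funpow)
    ultimately show ?thesis
      using abs_diff_measure_sym_diff_le[OF _ _ B] U(3) S by (meson order.strict_trans1)
  qed
  then show ?thesis using U(1,2) by blast
qed

lemma first_category_in_eventually_ge:
  fixes \<phi> :: "nat \<Rightarrow> 'a \<Rightarrow> real"
  assumes dense: "X closure_of D = topspace X"
    and usc: "\<And>n y e. y \<in> D \<Longrightarrow> e > 0 \<Longrightarrow>
               \<exists>U. openin X U \<and> y \<in> U \<and> (\<forall>x\<in>U. \<phi> n x < \<phi> n y + e)"
    and small: "\<And>y. y \<in> D \<Longrightarrow> \<exists>\<^sub>F n in sequentially. \<phi> n y < c"
    and S: "S \<subseteq> topspace X" "\<And>x. x \<in> S \<Longrightarrow> \<forall>\<^sub>F n in sequentially. c \<le> \<phi> n x"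
  shows "first_category_in X S"
proof -
  define A where "A N = {x \<in> topspace X. \<forall>n\<ge>N. c \<le> \<phi> n x}" for N
  have "S \<subseteq> (\<Union>N. A N)"
    using S unfolding A_def eventually_sequentially by blast
  moreover have "A N \<subseteq> topspace X" for N
    unfolding A_def by blast
  moreover have "X interior_of (X closure_of A N) = {}" for N
  proof (rule ccontr)
    assume "X interior_of (X closure_of A N) \<noteq> {}"
    then obtain W x where W: "openin X W" "x \<in> W" "W \<subseteq> X closure_of A N"
      unfolding interior_of_def by blast
    then obtain y where y: "y \<in> D" "y \<in> W"
      using dense openin_subset by (metis in_closure_of subsetD)
    obtain n where n: "n \<ge> N" "\<phi> n y < c"
      using small[OF y(1)] unfolding frequently_sequentially by blast
    obtain U where U: "openin X U" "y \<in> U" "\<And>x. x \<in> U \<Longrightarrow> \<phi> n x < c"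
      using usc[OF y(1), of "c - \<phi> n y" n] n(2) by auto
    have "y \<in> X closure_of A N" using W y by blast
    then obtain x where "x \<in> A N" "x \<in> W \<inter> U"
      using openin_Int[OF W(1) U(1)] y U(2) unfolding in_closure_of by blast
    then show False using U(3) n(1) unfolding A_def by force
  qed
  ultimately show ?thesis
    unfolding first_category_in_def nowhere_dense_in_def by blast
qed

lemma prob_space_UI: "prob_space UI"
  unfolding UI_def by (rule prob_spaceI) (simp add: emeasure_restrict_space)

lemma space_UI [simp]: "space UI = {0..1}"
  unfolding UI_def by simp

lemma prob_space_ZZ: "prob_space ZZ"
  unfolding ZZ_def using prob_space_UI by (simp add: prob_space_pair)

lemma space_ZZ [simp]: "space ZZ = {0..1} \<times> {0..1}"
  unfolding ZZ_def by (simp add: space_pair_measure)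

lemma atLeastAtMost_in_sets_UI: "0 \<le> a \<Longrightarrow> b \<le> 1 \<Longrightarrow> {a..b} \<in> sets UI"
  unfolding UI_def by (subst sets_restrict_space_iff) auto

lemma measure_UI_interval: "0 \<le> a \<Longrightarrow> a \<le> b \<Longrightarrow> b \<le> 1 \<Longrightarrow> measure UI {a..b} = b - a"
  unfolding UI_def by (subst measure_restrict_space) auto

lemma measurable_snd_ZZ [measurable]: "snd \<in> borel_measurable ZZ"
proof -
  have "(\<lambda>x. x) \<in> borel_measurable UI"
    unfolding UI_def by (rule measurable_restrict_space1) simp
  then show ?thesis
    unfolding ZZ_def using measurable_compose[OF measurable_snd] by blast
qed

definition lower_half :: "(real \<times> real) set" where
  "lower_half = {0..1} \<times> {0..1/2}"

definition half_sign :: "real \<times> real \<Rightarrow> real" where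
  "half_sign z = (if snd z \<le> 1/2 then 1 else -1)"

abbreviation lower_half_displacement :: "(real \<times> real \<Rightarrow> real \<times> real) \<Rightarrow> nat \<Rightarrow> real" where
  "lower_half_displacement T n \<equiv> measure ZZ (sym_diff ((T ^^ n) ` lower_half) lower_half)"

lemma lower_half_in_sets [measurable]: "lower_half \<in> sets ZZ"
  unfolding lower_half_def ZZ_def
  by (intro pair_measureI atLeastAtMost_in_sets_UI) auto

lemma half_sign_measurable [measurable]: "half_sign \<in> borel_measurable ZZ"
proof -
  have "{z \<in> space ZZ. snd z \<le> 1/2} \<in> sets ZZ" by measurable
  then show ?thesis unfolding half_sign_def by measurable
qed

lemma abs_half_sign [simp]: "\<bar>half_sign z\<bar> = 1"
  by (simp add: half_sign_def)

lemma integral_half_sign_diff_square: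
  assumes T: "T \<in> MPT ZZ"
  shows "(\<integral>z. (half_sign (T z) - half_sign z)\<^sup>2 \<partial>ZZ)
       = 4 * measure ZZ (sym_diff (T ` lower_half) lower_half)"
proof -
  define C where "C = sym_diff (T ` lower_half) lower_half"
  have C: "C \<in> sets ZZ" unfolding C_def using MPT_image_sets[OF T] by auto
  define D where "D = T -` C \<inter> space ZZ"
  have D: "D \<in> sets ZZ" unfolding D_def using MPT_measurable[OF T] C by (rule measurable_sets)
  have bij: "bij_betw T (space ZZ) (space ZZ)" using T by (rule MPT_bij)
  have "(half_sign (T z) - half_sign z)\<^sup>2 = 4 * indicator D z" if z: "z \<in> space ZZ" for z
  proof -
    have Tz: "T z \<in> space ZZ" using bij_betwE[OF bij] z by blast
    have sign: "half_sign w = (if w \<in> lower_half then 1 else -1)" if "w \<in> space ZZ" for w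
      using that by (auto simp: half_sign_def lower_half_def)
    have "T z \<in> T ` lower_half \<longleftrightarrow> z \<in> lower_half"
      using bij z sets.sets_into_space[OF lower_half_in_sets]
      unfolding bij_betw_def inj_on_def by blast
    then show ?thesis
      using z by (cases "z \<in> lower_half"; cases "T z \<in> lower_half")
        (simp_all add: sign[OF z] sign[OF Tz] D_def C_def)
  qed
  then have "(\<integral>z. (half_sign (T z) - half_sign z)\<^sup>2 \<partial>ZZ) = (\<integral>z. 4 * indicator D z \<partial>ZZ)"
    by (intro Bochner_Integration.integral_cong) auto
  also have "\<dots> = 4 * measure ZZ D"
    using D sets.sets_into_space[OF D] by (simp add: Int_absorb2)
  also have "measure ZZ D = measure ZZ C"
    unfolding D_def using T C by (rule MPT_measure_vimage)
  finally show ?thesis unfolding C_def .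
qed

lemma integral_half_sign_correlation:
  assumes T: "T \<in> MPT ZZ"
  shows "(\<integral>z. half_sign (T z) * half_sign z \<partial>ZZ)
       = 1 - 2 * measure ZZ (sym_diff (T ` lower_half) lower_half)"
proof -
  interpret prob_space ZZ by (rule prob_space_ZZ)
  note [measurable] = MPT_measurable[OF T]
  have "half_sign (T z) * half_sign z = 1 - (half_sign (T z) - half_sign z)\<^sup>2 / 2" for z
    by (simp add: half_sign_def)
  moreover have "integrable ZZ (\<lambda>z. (half_sign (T z) - half_sign z)\<^sup>2)"
    by (rule integrable_const_bound[where B=4]) (auto simp: half_sign_def)
  ultimately show ?thesis
    using integral_half_sign_diff_square[OF T] prob_space by simp
qed

lemma sets_Xalg: "sets Xalg = {fst -` A \<inter> space ZZ | A. A \<in> sets UI}"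
  unfolding Xalg_def by (rule sets_vimage_algebra2) auto

lemma measurable_fst_ZZ: "fst \<in> measurable ZZ UI"
  unfolding ZZ_def by (rule measurable_fst)

lemma sigma_finite_subalgebra_Xalg: "sigma_finite_subalgebra ZZ Xalg"
proof -
  interpret prob_space ZZ by (rule prob_space_ZZ)
  have "subalgebra ZZ Xalg"
    unfolding subalgebra_def sets_Xalg using measurable_sets[OF measurable_fst_ZZ]
    by (auto simp: Xalg_def)
  then show ?thesis
    by (intro finite_measure_subalgebra_is_sigma_finite finite_measure_subalgebra.intro)
       unfold_locales
qed

lemma integral_UI_half_sign: "(\<integral>y. half_sign (x, y) \<partial>UI) = 0"
proof -
  interpret prob_space UI by (rule prob_space_UI)
  have half: "{0..1/2} \<in> sets UI" by (rule atLeastAtMost_in_sets_UI) auto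
  have "(\<integral>y. half_sign (x, y) \<partial>UI) = (\<integral>y. 2 * indicator {0..1/2} y - 1 \<partial>UI)"
    by (rule Bochner_Integration.integral_cong) (auto simp: half_sign_def indicator_def)
  also have "\<dots> = 2 * measure UI {0..1/2} - 1"
    using half prob_space by (simp add: emeasure_eq_measure)
  finally show ?thesis by (simp add: measure_UI_interval)
qed

lemma cond_exp_half_sign: "AE z in ZZ. real_cond_exp ZZ Xalg half_sign z = 0"
proof -
  interpret S: sigma_finite_subalgebra ZZ Xalg by (rule sigma_finite_subalgebra_Xalg)
  interpret P: prob_space ZZ by (rule prob_space_ZZ)
  interpret U: prob_space UI by (rule prob_space_UI)
  interpret PS: pair_sigma_finite UI UI by unfold_locales
  have integrable: "integrable ZZ (\<lambda>z. indicator A (fst z) * half_sign z)" if "A \<in> sets UI" for A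
    using that measurable_fst_ZZ
    by (intro P.integrable_const_bound[where B=1]) (auto simp: indicator_def half_sign_def)
  show ?thesis
  proof (rule S.real_cond_exp_charact)
    fix A assume "A \<in> sets Xalg"
    then obtain A' where A': "A' \<in> sets UI" "A = fst -` A' \<inter> space ZZ"
      unfolding sets_Xalg by blast
    have "(\<integral>z\<in>A. half_sign z \<partial>ZZ) = (\<integral>z. indicator A' (fst z) * half_sign z \<partial>ZZ)"
      unfolding set_lebesgue_integral_def A'
      by (rule Bochner_Integration.integral_cong) (auto simp: indicator_def)
    also have "\<dots> = (\<integral>x. (\<integral>y. indicator A' x * half_sign (x, y) \<partial>UI) \<partial>UI)"
      using PS.integral_fst'[OF integrable[OF A'(1), unfolded ZZ_def]] by (simp add: ZZ_def)
    also have "\<dots> = 0" by (simp add: integral_UI_half_sign)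
    finally show "(\<integral>z\<in>A. half_sign z \<partial>ZZ) = (\<integral>z\<in>A. 0 \<partial>ZZ)" by simp
  next
    show "integrable ZZ half_sign" by (rule P.integrable_const_bound[where B=1]) auto
  qed simp_all
qed

lemma (in sigma_finite_subalgebra) cond_exp_c_of_real:
  "AE z in M. cond_exp_c M F (\<lambda>w. complex_of_real (f w)) z = complex_of_real (real_cond_exp M F f z)"
proof -
  have "AE z in M. real_cond_exp M F (\<lambda>_. 0) z = 0" by (rule real_cond_exp_F_meas) auto
  then show ?thesis by eventually_elim (simp add: cond_exp_c_def)
qed

lemma (in prob_space) abs_integral_le_sqrt_integral_square:
  fixes g :: "'a \<Rightarrow> real"
  assumes "integrable M g" "integrable M (\<lambda>x. (g x)\<^sup>2)"
  shows "\<bar>\<integral>x. g x \<partial>M\<bar> \<le> sqrt (\<integral>x. (g x)\<^sup>2 \<partial>M)"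
proof -
  have "(\<integral>x. g x \<partial>M)\<^sup>2 \<le> (\<integral>x. (g x)\<^sup>2 \<partial>M)"
    using variance_positive[of g] variance_eq[OF assms] by simp
  from real_sqrt_le_mono[OF this] show ?thesis by simp
qed

lemma abs_integral_le_sqrt_integral_cond_exp_square:
  fixes f :: "'a \<Rightarrow> real"
  assumes "prob_space M" "sigma_finite_subalgebra M F"
    and [measurable]: "f \<in> borel_measurable M"
    and bounded: "\<And>x. x \<in> space M \<Longrightarrow> \<bar>f x\<bar> \<le> c"
  shows "\<bar>\<integral>x. f x \<partial>M\<bar> \<le> sqrt (\<integral>x. (real_cond_exp M F f x)\<^sup>2 \<partial>M)"
proof -
  interpret prob_space M by fact
  interpret sigma_finite_subalgebra M F by fact
  have f: "integrable M f"
    using bounded by (intro integrable_const_bound[where B=c]) auto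
  have "AE x in M. f x \<le> c" "AE x in M. - c \<le> f x"
    using bounded by (fastforce intro!: AE_I2 simp: abs_le_iff)+
  then have "AE x in M. real_cond_exp M F f x \<le> c" "AE x in M. - c \<le> real_cond_exp M F f x"
    using f real_cond_exp_le_c real_cond_exp_ge_c by blast+
  moreover have "r\<^sup>2 \<le> c\<^sup>2" if "r \<le> c" "- c \<le> r" for r :: real
  proof -
    have "\<bar>r\<bar> \<le> c" using that by linarith
    then show ?thesis using power_mono[of "\<bar>r\<bar>" c 2] by simp
  qed
  ultimately have "AE x in M. norm ((real_cond_exp M F f x)\<^sup>2) \<le> c\<^sup>2"
    by auto
  then have "integrable M (\<lambda>x. (real_cond_exp M F f x)\<^sup>2)"
    by (intro integrable_const_bound[where B="c\<^sup>2"]) auto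
  then have "\<bar>\<integral>x. real_cond_exp M F f x \<partial>M\<bar> \<le> sqrt (\<integral>x. (real_cond_exp M F f x)\<^sup>2 \<partial>M)"
    by (rule abs_integral_le_sqrt_integral_square[OF real_cond_exp_int(1)[OF f]])
  then show ?thesis by (simp only: real_cond_exp_int(2)[OF f])
qed

lemma L2rel_of_real_half_sign: "L2rel (\<lambda>z. complex_of_real (half_sign z))"
proof -
  interpret sigma_finite_subalgebra ZZ Xalg by (rule sigma_finite_subalgebra_Xalg)
  interpret prob_space ZZ by (rule prob_space_ZZ)
  have "AE z in ZZ. real_cond_exp ZZ Xalg (\<lambda>_. 1) z \<le> 1"
    by (rule real_cond_exp_le_c) auto
  then show ?thesis unfolding L2rel_def by (auto simp: abs_square_eq_1)
qed

lemma rigid_frequently_small_displacement: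
  assumes T: "T \<in> MPT ZZ" and "rigid ZZ T" and e: "e > 0"
  shows "\<exists>\<^sub>F n in sequentially. lower_half_displacement T n < e"
proof -
  interpret prob_space ZZ by (rule prob_space_ZZ)
  obtain r where r: "strict_mono r" and rigid: "\<And>f. f \<in> borel_measurable ZZ \<Longrightarrow>
      integrable ZZ (\<lambda>x. (cmod (f x))\<^sup>2) \<Longrightarrow>
      (\<lambda>k. sqrt (\<integral>x. (cmod (f ((T ^^ r k) x) - f x))\<^sup>2 \<partial>ZZ)) \<longlonglongrightarrow> 0"
    using \<open>rigid ZZ T\<close> unfolding rigid_def by blast
  have "(\<integral>z. (cmod (complex_of_real (half_sign ((T ^^ n) z)) - complex_of_real (half_sign z)))\<^sup>2 \<partial>ZZ)
      = 4 * lower_half_displacement T n" for n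
    using integral_half_sign_diff_square[OF MPT_funpow[OF T]]
    by (simp flip: of_real_diff)
  then have "(\<lambda>k. sqrt (4 * lower_half_displacement T (r k))) \<longlonglongrightarrow> 0"
    using rigid[of "\<lambda>z. complex_of_real (half_sign z)"] by simp
  then have "(\<lambda>k. (sqrt (4 * lower_half_displacement T (r k)))\<^sup>2 / 4) \<longlonglongrightarrow> 0\<^sup>2 / 4"
    by (intro tendsto_intros) simp_all
  then have "(\<lambda>k. lower_half_displacement T (r k)) \<longlonglongrightarrow> 0"
    by simp
  from order_tendstoD(2)[OF this e]
  obtain K where K: "\<And>k. k \<ge> K \<Longrightarrow> lower_half_displacement T (r k) < e"
    unfolding eventually_sequentially by blast
  show ?thesis
    unfolding frequently_sequentially
  proof
    fix N
    have "N \<le> r (max K N)" using seq_suble[OF r, of "max K N"] by simp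
    then show "\<exists>n\<ge>N. lower_half_displacement T n < e" using K[of "max K N"] by auto
  qed
qed

lemma measurable_apfst_ZZ:
  assumes "R \<in> measurable UI UI"
  shows "(\<lambda>z. (R (fst z), snd z)) \<in> measurable ZZ ZZ"
  unfolding ZZ_def using assms by measurable

lemma cond_exp_c_measurable [measurable]: "cond_exp_c M F f \<in> borel_measurable M"
  unfolding cond_exp_c_def by measurable

lemma mixing_ext_displacement_tendsto:
  assumes T0: "T0 \<in> MPT UI" and T: "T \<in> MPT ZZ" and "mixing_ext T0 T"
  shows "(\<lambda>n. lower_half_displacement T n) \<longlonglongrightarrow> 1/2"
proof -
  interpret S: sigma_finite_subalgebra ZZ Xalg by (rule sigma_finite_subalgebra_Xalg)
  define f where "f z = complex_of_real (half_sign z)" for z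
  define r where "r n = real_cond_exp ZZ Xalg (\<lambda>w. half_sign ((T ^^ n) w) * half_sign w)" for n
  define J where "J n z = (cmod (cond_exp_c ZZ Xalg (\<lambda>w. f ((T ^^ n) w) * cnj (f w)) z
                         - cond_exp_c ZZ Xalg f ((T0 ^^ n) (fst z), snd z)
                           * cond_exp_c ZZ Xalg (\<lambda>w. cnj (f w)) z))\<^sup>2" for n z
  \<comment> \<open>As E(half_sign|X) = 0, the mixing condition for f says that E(f o T^n * f|X) \<rightarrow> 0 in L^2.\<close>
  note [measurable] = MPT_measurable[OF MPT_funpow[OF T]]
    measurable_apfst_ZZ[OF MPT_measurable[OF MPT_funpow[OF T0]]]
  have mixing: "(\<lambda>n. sqrt (\<integral>z. J n z \<partial>ZZ)) \<longlonglongrightarrow> 0"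
    using \<open>mixing_ext T0 T\<close> L2rel_of_real_half_sign unfolding mixing_ext_def J_def f_def by blast
  have integral_J: "(\<integral>z. J n z \<partial>ZZ) = (\<integral>z. (r n z)\<^sup>2 \<partial>ZZ)" for n
  proof (rule integral_cong_AE)
    show "J n \<in> borel_measurable ZZ" "(\<lambda>z. (r n z)\<^sup>2) \<in> borel_measurable ZZ"
      unfolding J_def[abs_def] r_def by measurable
    have "AE z in ZZ. cond_exp_c ZZ Xalg (\<lambda>w. f ((T ^^ n) w) * cnj (f w)) z = r n z"
      using S.cond_exp_c_of_real[of "\<lambda>w. half_sign ((T ^^ n) w) * half_sign w"]
      by (simp add: f_def r_def)
    moreover have "AE z in ZZ. cond_exp_c ZZ Xalg (\<lambda>w. cnj (f w)) z = 0"
      using S.cond_exp_c_of_real[of half_sign] cond_exp_half_sign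
      by eventually_elim (simp add: f_def)
    ultimately show "AE z in ZZ. J n z = (r n z)\<^sup>2"
      by eventually_elim (simp add: J_def)
  qed
  have bound: "\<bar>1 - 2 * lower_half_displacement T n\<bar> \<le> sqrt (\<integral>z. (r n z)\<^sup>2 \<partial>ZZ)" for n
    using abs_integral_le_sqrt_integral_cond_exp_square[OF prob_space_ZZ sigma_finite_subalgebra_Xalg,
        of "\<lambda>w. half_sign ((T ^^ n) w) * half_sign w" 1]
      integral_half_sign_correlation[OF MPT_funpow[OF T]]
    by (simp add: r_def abs_mult)
  have "\<forall>\<^sub>F n in sequentially. norm (1 - 2 * lower_half_displacement T n) \<le> sqrt (\<integral>z. (r n z)\<^sup>2 \<partial>ZZ)"
    using bound by (simp add: always_eventually)
  then have "(\<lambda>n. 1 - 2 * lower_half_displacement T n) \<longlonglongrightarrow> 0"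
    by (rule Lim_null_comparison) (use mixing in \<open>simp only: integral_J\<close>)
  then have "(\<lambda>n. (1 - (1 - 2 * lower_half_displacement T n)) / 2) \<longlonglongrightarrow> (1 - 0) / 2"
    by (intro tendsto_intros) simp_all
  then show ?thesis by simp
qed

lemma ext_set_subset_MPT: "ext_set T0 \<subseteq> MPT ZZ"
  by (auto simp: ext_set_def)

theorem lemma3p2:
  fixes T0 :: "real \<Rightarrow> real"
  assumes "T0 \<in> MPT UI"
    and "(subtopology (weak_top ZZ) (ext_set T0)) closure_of (rigid_set ZZ \<inter> ext_set T0)
           = topspace (subtopology (weak_top ZZ) (ext_set T0))"
  shows "first_category_in (subtopology (weak_top ZZ) (ext_set T0)) (mixing_ext_set T0)"
proof (rule first_category_in_eventually_ge[OF assms(2),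
      where \<phi> = "\<lambda>n T. lower_half_displacement T n" and c = "1/4"])
  fix n y and e :: real
  assume y: "y \<in> rigid_set ZZ \<inter> ext_set T0" and "e > 0"
  then have yM: "y \<in> MPT ZZ" using ext_set_subset_MPT by blast
  obtain U where "openin (weak_top ZZ) U" "y \<in> U"
    "\<forall>S\<in>U. \<bar>lower_half_displacement S n - lower_half_displacement y n\<bar> < e"
    using weak_top_measure_sym_diff_funpow_continuous[OF prob_space.finite_measure[OF prob_space_ZZ]
        yM lower_half_in_sets \<open>e > 0\<close>, of n] by (elim exE conjE)
  then show "\<exists>U. openin (subtopology (weak_top ZZ) (ext_set T0)) U \<and> y \<in> U \<and>
      (\<forall>x\<in>U. lower_half_displacement x n < lower_half_displacement y n + e)"
    using y by (intro exI[of _ "U \<inter> ext_set T0"]) (auto simp: openin_subtopology_Int abs_less_iff)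
next
  fix y assume "y \<in> rigid_set ZZ \<inter> ext_set T0"
  then show "\<exists>\<^sub>F n in sequentially. lower_half_displacement y n < 1/4"
    by (intro rigid_frequently_small_displacement) (auto simp: rigid_set_def)
next
  show "mixing_ext_set T0 \<subseteq> topspace (subtopology (weak_top ZZ) (ext_set T0))"
    using ext_set_subset_MPT by (auto simp: mixing_ext_set_def topspace_weak_top)
next
  fix T assume "T \<in> mixing_ext_set T0"
  then have "(\<lambda>n. lower_half_displacement T n) \<longlonglongrightarrow> 1/2"
    using mixing_ext_displacement_tendsto[OF assms(1)] ext_set_subset_MPT
    by (auto simp: mixing_ext_set_def)
  then show "\<forall>\<^sub>F n in sequentially. 1/4 \<le> lower_half_displacement T n"
    by (rule order_tendstoD(1)[where a = "1/4", THEN eventually_mono]) simp_all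
qed

end
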